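(* Let $n\ge2$ and $\boldsymbol{\lambda}=(\lambda_1,\dots,\lambda_n)$ a vector of positive integers. For every minimal generator $(a_1,\dots,a_n,d)$ of $M(\boldsymbol{\lambda})$ we have $d<n$.
   Context: $M(\boldsymbol{\lambda})=\{(a_1,\dots,a_n,d)\in\mathbb{N}^{n+1}\mid a_1/\lambda_1+\cdots+a_n/\lambda_n\ge d\}$. A minimal generator of $M(\boldsymbol{\lambda})$ is a nonzero element that cannot be written as the sum of two nonzero elements of $M(\boldsymbol{\lambda})$. *)

theory Defs
  imports Complex_Main
begin

definition Mlam :: "nat list \<Rightarrow> (nat list \<times> nat) set" where
  "Mlam lam = {(a, d). length a = length lam \<and>
      (\<Sum>i<length lam. real (a ! i) / real (lam ! i)) \<ge> real d}"

definition elem_add :: "nat list \<times> nat \<Rightarrow> nat list \<times> nat \<Rightarrow> nat list \<times> nat" where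
  "elem_add x y = (map2 (+) (fst x) (fst y), snd x + snd y)"

definition elem_zero :: "nat \<Rightarrow> nat list \<times> nat" where
  "elem_zero n = (replicate n 0, 0)"

definition minimal_generator :: "nat list \<Rightarrow> nat list \<times> nat \<Rightarrow> bool" where
  "minimal_generator lam x \<longleftrightarrow>
     x \<in> Mlam lam \<and> x \<noteq> elem_zero (length lam) \<and>
     \<not> (\<exists>y\<in>Mlam lam. \<exists>z\<in>Mlam lam.
           y \<noteq> elem_zero (length lam) \<and> z \<noteq> elem_zero (length lam) \<and> x = elem_add y z)"

end

theory Submission
  imports Defs
begin

text \<open>Write \<open>w(a) = \<Sum> a\<^sub>i / \<lambda>\<^sub>i\<close>. If some \<open>a\<^sub>j \<ge> \<lambda>\<^sub>j\<close> and \<open>d \<ge> 2\<close>, then \<open>(a, d)\<close> splits as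
  \<open>(\<lambda>\<^sub>j e\<^sub>j, 1) + (a - \<lambda>\<^sub>j e\<^sub>j, d - 1)\<close>, both summands lying in \<open>M(\<lambda>)\<close> because \<open>w(\<lambda>\<^sub>j e\<^sub>j) = 1\<close>.
  Hence a minimal generator with \<open>d \<ge> 2\<close> has \<open>a\<^sub>i < \<lambda>\<^sub>i\<close> for all \<open>i\<close>, so \<open>d \<le> w(a) < n\<close>.\<close>

definition lam_weight :: "nat list \<Rightarrow> nat list \<Rightarrow> real" where
  "lam_weight lam a = (\<Sum>i<length lam. real (a ! i) / real (lam ! i))"

definition scaled_unit :: "nat list \<Rightarrow> nat \<Rightarrow> nat list" where
  "scaled_unit lam j = (replicate (length lam) 0)[j := lam ! j]"

lemma Mlam_iff:
  "(a, d) \<in> Mlam lam \<longleftrightarrow> length a = length lam \<and> real d \<le> lam_weight lam a"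
  by (simp add: Mlam_def lam_weight_def)

lemma lam_weight_map2_add:
  assumes "length a = length lam" and "length b = length lam"
  shows "lam_weight lam (map2 (+) a b) = lam_weight lam a + lam_weight lam b"
  using assms by (simp add: lam_weight_def add_divide_distrib sum.distrib)

lemma lam_weight_scaled_unit:
  assumes "j < length lam" and "lam ! j > 0"
  shows "lam_weight lam (scaled_unit lam j) = 1"
proof -
  have "lam_weight lam (scaled_unit lam j) = (\<Sum>i<length lam. if i = j then 1 else 0)"
    unfolding lam_weight_def scaled_unit_def using assms
    by (intro sum.cong) (auto simp: nth_list_update)
  also have "\<dots> = 1" using assms(1) by simp
  finally show ?thesis .
qed

lemma lam_weight_less_length:
  assumes "length lam > 0" and "\<forall>i<length lam. a ! i < lam ! i"
  shows "lam_weight lam a < real (length lam)"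
proof -
  have "lam_weight lam a < (\<Sum>i<length lam. 1)"
    unfolding lam_weight_def using assms
    by (intro sum_strict_mono) (auto simp: lessThan_empty_iff)
  then show ?thesis by simp
qed

lemma map2_add_scaled_unit:
  assumes "length a = length lam" and "j < length lam" and "lam ! j \<le> a ! j"
  shows "map2 (+) (scaled_unit lam j) (a[j := a ! j - lam ! j]) = a"
  using assms by (intro nth_equalityI) (auto simp: scaled_unit_def nth_list_update)

lemma Mlam_split_scaled_unit:
  assumes a: "(a, d) \<in> Mlam lam" and "d \<ge> 1"
    and j: "j < length lam" "lam ! j > 0" "lam ! j \<le> a ! j"
  defines "rest \<equiv> a[j := a ! j - lam ! j]"
  shows "(scaled_unit lam j, 1) \<in> Mlam lam" and "(rest, d - 1) \<in> Mlam lam"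
    and "(a, d) = elem_add (scaled_unit lam j, 1) (rest, d - 1)"
proof -
  have len: "length a = length lam" "length rest = length lam"
    "length (scaled_unit lam j) = length lam"
    using a by (auto simp: Mlam_iff rest_def scaled_unit_def)
  have sum: "map2 (+) (scaled_unit lam j) rest = a"
    unfolding rest_def using len j by (intro map2_add_scaled_unit)
  have "lam_weight lam a = 1 + lam_weight lam rest"
    using lam_weight_map2_add[OF len(3,2)] lam_weight_scaled_unit[OF j(1,2)] sum by simp
  then show "(rest, d - 1) \<in> Mlam lam"
    using a \<open>d \<ge> 1\<close> len by (auto simp: Mlam_iff of_nat_diff)
  show "(scaled_unit lam j, 1) \<in> Mlam lam"
    using len lam_weight_scaled_unit[OF j(1,2)] by (simp add: Mlam_iff)
  show "(a, d) = elem_add (scaled_unit lam j, 1) (rest, d - 1)"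
    using sum \<open>d \<ge> 1\<close> by (simp add: elem_add_def)
qed

lemma minimal_generator_coordinates_less:
  assumes gen: "minimal_generator lam (a, d)" and "d \<ge> 2"
    and pos: "\<forall>i<length lam. lam ! i > 0" and j: "j < length lam"
  shows "a ! j < lam ! j"
proof (rule ccontr)
  assume "\<not> a ! j < lam ! j"
  then have "lam ! j \<le> a ! j" by simp
  moreover have "(a, d) \<in> Mlam lam" using gen by (simp add: minimal_generator_def)
  ultimately have "(scaled_unit lam j, 1) \<in> Mlam lam"
    and "(a[j := a ! j - lam ! j], d - 1) \<in> Mlam lam"
    and "(a, d) = elem_add (scaled_unit lam j, 1) (a[j := a ! j - lam ! j], d - 1)"
    using Mlam_split_scaled_unit[of a d lam j] \<open>d \<ge> 2\<close> pos j by auto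
  moreover have "(scaled_unit lam j, 1) \<noteq> elem_zero (length lam)"
    and "(a[j := a ! j - lam ! j], d - 1) \<noteq> elem_zero (length lam)"
    using \<open>d \<ge> 2\<close> by (auto simp: elem_zero_def)
  ultimately show False using gen unfolding minimal_generator_def by blast
qed

theorem corollary5p5:
  fixes lam :: "nat list" and n :: nat and a :: "nat list" and d :: nat
  assumes "length lam = n" and "n \<ge> 2"
    and "\<forall>i<n. lam ! i > 0"
    and "minimal_generator lam (a, d)"
  shows "d < n"
proof (cases "d \<ge> 2")
  case True
  have "real d \<le> lam_weight lam a"
    using assms(4) by (simp add: minimal_generator_def Mlam_iff)
  also have "\<dots> < real n"
    using minimal_generator_coordinates_less[OF assms(4) True] assms(1-3)
    by (auto intro: lam_weight_less_length)
  finally show ?thesis by simp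
next
  case False
  then show ?thesis using assms(2) by simp
qed

end
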